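(* Let $h,k$ be positive integers with $\gcd(h,k)=1$ and $h+k$ odd. Then $$(k-1)B_{1}(h,k)+(h-1)B_{1}(k,h)=-\frac{1}{2}(k-1)(h-1).$$
   Context: $[x]$ denotes the greatest integer $\le x$. For integers $a,b$ with $b>0$ and $\gcd(a,b)=1$, define $$B_{1}(a,b)=\sum_{j=1}^{b-1}(-1)^{j+\left[\frac{aj}{b}\right]}\left[\frac{aj}{b}\right].$$ *)

theory Defs
  imports Complex_Main
begin

text \<open>B_1(a,b) = sum_{j=1}^{b-1} (-1)^(j + floor(aj/b)) * floor(aj/b), for b > 0, gcd(a,b)=1.
  Here floor(aj/b) = (a*j) div b since b > 0 (int division rounds toward minus infinity).\<close>
definition B1 :: "int \<Rightarrow> int \<Rightarrow> int" where
  "B1 a b = (\<Sum>j\<in>{1..b-1}. (-1) ^ nat (j + (a*j) div b) * ((a*j) div b))"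

end

theory Submission
  imports Defs
begin

text \<open>
  Write \<open>e(j) = (-1)^(j + \<lfloor>hj/k\<rfloor>)\<close> and \<open>T(h,k) = \<Sum>\<^sub>j e(j)\<close> (this is \<open>sign_sum h k\<close>).
  Since \<open>\<lfloor>h(k-j)/k\<rfloor> = h - 1 - \<lfloor>hj/k\<rfloor>\<close> and \<open>h + k\<close> is odd, the reflection
  \<open>j \<mapsto> k - j\<close> preserves \<open>e\<close>, which gives \<open>2 B\<^sub>1(h,k) = (h-1) T(h,k)\<close>.
  On the other hand the indices \<open>j + \<lfloor>hj/k\<rfloor>\<close> (\<open>0 < j < k\<close>) and
  \<open>i + \<lfloor>ki/h\<rfloor>\<close> (\<open>0 < i < h\<close>) are the positions, in order along the diagonal
  of the \<open>k \<times> h\<close> rectangle, at which it crosses the interior vertical and horizontal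
  grid lines respectively; coprimality makes these crossings distinct, so the indices
  partition \<open>{1..h+k-2}\<close>; hence \<open>T(h,k) + T(k,h)\<close> is an alternating sum of odd
  length, namely \<open>-1\<close>.
\<close>

definition lattice_index :: "int \<Rightarrow> int \<Rightarrow> int \<Rightarrow> int" where
  "lattice_index a b j = j + (a * j) div b"

definition sign_sum :: "int \<Rightarrow> int \<Rightarrow> int" where
  "sign_sum a b = (\<Sum>j\<in>{1..b-1}. (-1) ^ nat (lattice_index a b j))"

lemma coprime_not_dvd_mult:
  fixes a b j :: int
  assumes "coprime a b" "0 < j" "j < b"
  shows "\<not> b dvd a * j"
proof
  assume "b dvd a * j"
  with assms(1) have "b dvd j"
    by (metis coprime_commute coprime_dvd_mult_right_iff)
  with assms(2,3) show False
    using zdvd_imp_le by fastforce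
qed

lemma minus_one_power_nat_eq:
  fixes m n :: int
  assumes "0 \<le> m" "0 \<le> n" "even (m + n)"
  shows "(-1::'a::ring_1) ^ nat m = (-1) ^ nat n"
  using assms by (simp add: minus_one_power_iff even_nat_iff)

lemma int_div_less_of_less_mult:
  fixes x a b :: int
  assumes "0 < b" "x < a * b"
  shows "x div b < a"
proof -
  have "b * (x div b) \<le> x"
    using assms(1) minus_mod_eq_mult_div[of x b] pos_mod_sign[of b x] by linarith
  then have "b * (x div b) < b * a"
    using assms(2) by (simp add: mult.commute)
  then show ?thesis
    using assms(1) by simp
qed

lemma div_mult_bounds:
  fixes a b j :: int
  assumes "0 < a" "0 < b" "0 < j" "j < b"
  shows "0 \<le> (a * j) div b" "(a * j) div b \<le> a - 1"
proof -
  show "0 \<le> (a * j) div b"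
    using assms by (simp add: pos_imp_zdiv_nonneg_iff)
  have "(a * j) div b < a"
    using assms by (intro int_div_less_of_less_mult) auto
  then show "(a * j) div b \<le> a - 1"
    by simp
qed

lemma div_mult_reflect:
  fixes a b j :: int
  assumes "0 < b" "\<not> b dvd a * j"
  shows "(a * (b - j)) div b = a - 1 - (a * j) div b"
proof -
  define r where "r = (a * j) mod b"
  have "r \<noteq> 0" "0 \<le> r" "r < b"
    using assms unfolding r_def by (simp_all add: dvd_eq_mod_eq_0)
  moreover have "a * (b - j) = b * (a - 1 - (a * j) div b) + (b - r)"
    unfolding r_def by (simp add: algebra_simps minus_mod_eq_mult_div [symmetric])
  ultimately show ?thesis
    using assms(1) by (simp add: div_add_self1)
qed

lemma sum_minus_one_power_odd:
  fixes m :: int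
  assumes "0 < m" "odd m"
  shows "(\<Sum>n\<in>{1..m}. (-1::int) ^ nat n) = -1"
proof -
  have "(\<Sum>n\<in>{1..2 * int t + 1}. (-1::int) ^ nat n) = -1" for t
  proof (induction t)
    case 0
    then show ?case by simp
  next
    case (Suc t)
    have "{1..2 * int (Suc t) + 1} = insert (2 * int t + 3) (insert (2 * int t + 2) {1..2 * int t + 1})"
      by auto
    moreover have "(-1::int) ^ nat (2 * int t + 3) = -1" "(-1::int) ^ nat (2 * int t + 2) = 1"
      by (simp_all add: minus_one_power_iff even_nat_iff)
    ultimately show ?case
      using Suc by simp
  qed
  moreover obtain q where "m = 2 * q + 1"
    using assms(2) by (rule oddE)
  moreover from this have "q = int (nat q)"
    using assms(1) by simp
  ultimately show ?thesis
    by metis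
qed

lemma B1_reflection:
  fixes h k :: int
  assumes "0 < h" "0 < k" "coprime h k" "odd (h + k)"
  shows "2 * B1 h k = (h - 1) * sign_sum h k"
proof -
  define f where "f j = (h * j) div k" for j
  define e where "e j = (-1::int) ^ nat (j + f j)" for j
  have "B1 h k = (\<Sum>j\<in>{1..k-1}. e (k - j) * f (k - j))"
    unfolding B1_def e_def f_def
    by (rule sum.reindex_bij_witness[of _ "\<lambda>j. k - j" "\<lambda>j. k - j"]) auto
  also have "\<dots> = (\<Sum>j\<in>{1..k-1}. e j * (h - 1 - f j))"
  proof (rule sum.cong)
    fix j assume "j \<in> {1..k-1}"
    then have j: "0 < j" "j < k" by auto
    have reflect: "f (k - j) = h - 1 - f j"
      unfolding f_def using div_mult_reflect assms(2) coprime_not_dvd_mult[OF assms(3) j] .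
    have "0 \<le> f j" "f j \<le> h - 1"
      unfolding f_def using div_mult_bounds[OF assms(1,2) j] by auto
    \<comment> \<open>\<open>(k - j) + (h - 1 - f j)\<close> and \<open>j + f j\<close> differ by the even number \<open>h + k - 1 - 2(j + f j)\<close>\<close>
    then have "e (k - j) = e j"
      unfolding e_def reflect using j assms(4) by (intro minus_one_power_nat_eq) auto
    then show "e (k - j) * f (k - j) = e j * (h - 1 - f j)"
      using reflect by simp
  qed simp
  also have "\<dots> = (h - 1) * (\<Sum>j\<in>{1..k-1}. e j) - B1 h k"
    unfolding B1_def e_def f_def
    by (simp add: algebra_simps sum_subtractf sum_distrib_left sum.distrib)
  finally show ?thesis
    unfolding sign_sum_def lattice_index_def e_def f_def by simp
qed

lemma strict_mono_lattice_index:
  fixes a b :: int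
  assumes "0 \<le> a" "0 < b"
  shows "strict_mono (lattice_index a b)"
proof (rule strict_monoI)
  fix j j' :: int assume "j < j'"
  then have "(a * j) div b \<le> (a * j') div b"
    using assms by (intro zdiv_mono1 mult_left_mono) auto
  with \<open>j < j'\<close> show "lattice_index a b j < lattice_index a b j'"
    unfolding lattice_index_def by simp
qed

lemma inj_lattice_index:
  fixes a b :: int
  assumes "0 \<le> a" "0 < b"
  shows "inj (lattice_index a b)"
  using assms by (intro strict_mono_imp_inj_on strict_mono_lattice_index)

lemma lattice_index_mem:
  fixes a b j :: int
  assumes "0 < a" "0 < b" "j \<in> {1..b-1}"
  shows "lattice_index a b j \<in> {1..a+b-2}"
  using div_mult_bounds[of a b j] assms by (auto simp: lattice_index_def)

lemma lattice_index_neq_of_less: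
  fixes a b i j :: int
  assumes "0 < a" "0 < b" "b * i < a * j"
  shows "lattice_index a b j \<noteq> lattice_index b a i"
proof -
  have "(b * i) div b \<le> (a * j) div b"
    using assms by (intro zdiv_mono1) auto
  then have "i \<le> (a * j) div b"
    using assms(2) by simp
  moreover have "(b * i) div a < j"
    using assms by (intro int_div_less_of_less_mult) (auto simp: mult.commute)
  ultimately show ?thesis
    unfolding lattice_index_def by simp
qed

lemma lattice_index_disjoint:
  fixes h k :: int
  assumes "0 < h" "0 < k" "coprime h k"
  shows "lattice_index h k ` {1..k-1} \<inter> lattice_index k h ` {1..h-1} = {}"
proof -
  have "lattice_index h k j \<noteq> lattice_index k h i"
    if "j \<in> {1..k-1}" "i \<in> {1..h-1}" for i j
  proof -
    have "\<not> k dvd h * j"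
      using coprime_not_dvd_mult[OF assms(3)] that by auto
    then have "k * i \<noteq> h * j"
      by (metis dvd_triv_left)
    then consider "k * i < h * j" | "h * j < k * i"
      by linarith
    then show ?thesis
    proof cases
      case 1
      then show ?thesis
        using lattice_index_neq_of_less[of h k i j] assms(1,2) by simp
    next
      case 2
      then show ?thesis
        using lattice_index_neq_of_less[of k h j i] assms(1,2) by auto
    qed
  qed
  then show ?thesis
    by blast
qed

lemma lattice_index_partition:
  fixes h k :: int
  assumes "0 < h" "0 < k" "coprime h k"
  shows "lattice_index h k ` {1..k-1} \<union> lattice_index k h ` {1..h-1} = {1..h+k-2}"
proof (rule card_subset_eq)
  show "lattice_index h k ` {1..k-1} \<union> lattice_index k h ` {1..h-1} \<subseteq> {1..h+k-2}"
    using lattice_index_mem[OF assms(1,2)] lattice_index_mem[OF assms(2,1)]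
    by (auto simp: add.commute)
  have "inj (lattice_index h k)" "inj (lattice_index k h)"
    using inj_lattice_index assms(1,2) by simp_all
  then have "card (lattice_index h k ` {1..k-1} \<union> lattice_index k h ` {1..h-1})
      = nat (k - 1) + nat (h - 1)"
    using lattice_index_disjoint[OF assms]
    by (simp add: card_Un_disjoint card_image inj_on_subset)
  then show "card (lattice_index h k ` {1..k-1} \<union> lattice_index k h ` {1..h-1})
      = card {1..h+k-2}"
    using assms(1,2) by simp
qed simp

lemma sign_sum_reciprocity:
  fixes h k :: int
  assumes "0 < h" "0 < k" "coprime h k" "odd (h + k)"
  shows "sign_sum h k + sign_sum k h = -1"
proof -
  define s :: "int \<Rightarrow> int" where "s n = (-1) ^ nat n" for n
  have "sign_sum a b = sum s (lattice_index a b ` {1..b-1})" if "0 < a" "0 < b" for a b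
    using inj_lattice_index[of a b] that unfolding sign_sum_def s_def
    by (simp add: sum.reindex inj_on_subset)
  then have "sign_sum h k + sign_sum k h = sum s {1..h+k-2}"
    using assms lattice_index_disjoint lattice_index_partition
    by (simp add: sum.union_disjoint [symmetric])
  also have "\<dots> = -1"
    unfolding s_def using assms by (intro sum_minus_one_power_odd) auto
  finally show ?thesis .
qed

theorem theorem14:
  fixes h k :: int
  assumes "h > 0" and "k > 0" and "gcd h k = 1" and "odd (h + k)"
  shows "real_of_int ((k - 1) * B1 h k + (h - 1) * B1 k h) = - (1/2) * real_of_int ((k - 1) * (h - 1))"
proof -
  have "coprime h k" "coprime k h" "odd (k + h)"
    using assms(3,4) by (simp_all add: coprime_iff_gcd_eq_1 gcd.commute add.commute)
  then have reflection: "2 * B1 h k = (h - 1) * sign_sum h k" "2 * B1 k h = (k - 1) * sign_sum k h"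
    using B1_reflection assms(1,2,4) by auto
  have "2 * ((k - 1) * B1 h k + (h - 1) * B1 k h) = (k - 1) * (2 * B1 h k) + (h - 1) * (2 * B1 k h)"
    by (simp add: algebra_simps)
  also have "\<dots> = (k - 1) * (h - 1) * (sign_sum h k + sign_sum k h)"
    unfolding reflection by (simp add: algebra_simps)
  also have "\<dots> = - ((k - 1) * (h - 1))"
    using sign_sum_reciprocity \<open>coprime h k\<close> assms(1,2,4) by simp
  finally have "real_of_int (2 * ((k - 1) * B1 h k + (h - 1) * B1 k h)) = - real_of_int ((k - 1) * (h - 1))"
    by simp
  then show ?thesis
    by simp
qed

end
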